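(* Let $n\in\mathbb{Z}$ and let $x^n$ denote the $n$-th power of the invertible dot $x$ in $\mathrm{QAW}(A;z)$ (so $x^n$ is a power of $x^{-1}$ if $n<0$). In $\mathrm{End}_{\mathrm{QAW}(A;z)}(\uparrow\otimes\uparrow)$ the following hold, where $T:=z\sum_{b\in B_A}\tau_b\otimes\tau_{b^\vee}$: (i) $S\circ(1\otimes x^n)=(x^n\otimes 1)\circ S^- -\sum_{r+s=n,\ r,s>0}(x^r\otimes x^s)\circ T$ if $n>0$, and $S\circ(1\otimes x^n)=(x^n\otimes 1)\circ S^- +\sum_{r+s=n,\ r,s\le 0}(x^r\otimes x^s)\circ T$ if $n\le 0$; (ii) $S\circ(x^n\otimes 1)=(1\otimes x^n)\circ S^- +\sum_{r+s=n,\ r,s\ge 0}(x^r\otimes x^s)\circ T$ if $n\ge 0$, and $S\circ(x^n\otimes 1)=(1\otimes x^n)\circ S^- -\sum_{r+s=n,\ r,s<0}(x^r\otimes x^s)\circ T$ if $n<0$; (iii) $S^-\circ(x^n\otimes 1)=(1\otimes x^n)\circ S +\sum_{r+s=n,\ r,s>0}(x^r\otimes x^s)\circ T$ if $n>0$, and $S^-\circ(x^n\otimes 1)=(1\otimes x^n)\circ S -\sum_{r+s=n,\ r,s\le 0}(x^r\otimes x^s)\circ T$ if $n\le 0$; (iv) $S^-\circ(1\otimes x^n)=(x^n\otimes 1)\circ S -\sum_{r+s=n,\ r,s\ge 0}(x^r\otimes x^s)\circ T$ if $n\ge 0$, and $S^-\circ(1\otimes x^n)=(x^n\otimes 1)\circ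 S +\sum_{r+s=n,\ r,s<0}(x^r\otimes x^s)\circ T$ if $n<0$. (All sums are over pairs of integers $(r,s)$.)
   Context: Let $\Bbbk$ be a commutative ring, $z\in\Bbbk^\times$, and $A$ a symmetric Frobenius superalgebra over $\Bbbk$: it has an even trace $\mathrm{tr}:A\to\Bbbk$ with $\mathrm{tr}(ab)=(-1)^{\bar a\bar b}\mathrm{tr}(ba)$, a homogeneous basis $B_A$ and a left dual basis $\{b^\vee\}$ with $\mathrm{tr}(b^\vee c)=\delta_{b,c}$. Monoidal supercategories satisfy the super interchange law $(f'\otimes g)\circ(f\otimes g')=(-1)^{\bar f\bar g}(f'\circ f)\otimes(g\circ g')$. The quantum affine wreath product category $\mathrm{QAW}(A;z)$ is the strict $\Bbbk$-linear monoidal supercategory generated by one object $\uparrow$ and morphisms: even $S,S^-:\uparrow\otimes\uparrow\to\uparrow\otimes\uparrow$ (positive and negative crossing), $\tau_a:\uparrow\to\uparrow$ of parity $\bar a$ for $a\in A$ (tokens), and an even invertible $x:\uparrow\to\uparrow$ (dot), subject to: $a\mapsto\tau_a$ is a unital superalgebra homomorphism $A\to\mathrm{End}(\uparrow)$; $S\circ S^-=S^-\circ S=1_{\uparrow\otimes\uparrow}$; $(S\otimes 1)(1\otimes S)(S\otimes 1)=(1\otimes S)(S\otimes 1)(1\otimes S)$; $S\circ(\tau_a\otimes 1)=(1\otimes\tau_a)\circ S$ and $S^-\circ(\tau_a\otimes 1)=(1\otimes\tau_a)\circ S^-$; $S-S^-=z\sum_{b\in B_A}\tau_b\otimes\tau_{b^\vee}$;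 $x\circ\tau_a=\tau_a\circ x$; $S\circ(1\otimes x)=(x\otimes1)\circ S^-$ and $S^-\circ(x\otimes 1)=(1\otimes x)\circ S$. *)

theory Defs
  imports Complex_Main
begin

locale super_module = module scale
  for scale :: "'k::comm_ring_1 \<Rightarrow> 'v::ab_group_add \<Rightarrow> 'v" +
  fixes gr :: "bool \<Rightarrow> 'v set"  (* gr False = even part, gr True = odd part *)
  assumes gr_subspace: "subspace (gr i)"
    and gr_direct: "gr False \<inter> gr True = {0}"
    and gr_sum: "\<forall>v. \<exists>v0 v1. v0 \<in> gr False \<and> v1 \<in> gr True \<and> v = v0 + v1"

locale superalgebra = super_module scale gr
  for scale :: "'k::comm_ring_1 \<Rightarrow> 'a::ring_1 \<Rightarrow> 'a" and gr +
  assumes scale_mult_left: "scale c a * b = scale c (a * b)"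
    and scale_mult_right: "a * scale c b = scale c (a * b)"
    and one_even: "1 \<in> gr False"
    and gr_mult: "a \<in> gr i \<Longrightarrow> b \<in> gr j \<Longrightarrow> a * b \<in> gr (i \<noteq> j)"

locale symmetric_frobenius_superalgebra = superalgebra scale gr
  for scale :: "'k::comm_ring_1 \<Rightarrow> 'a::ring_1 \<Rightarrow> 'a" and gr +
  fixes tr :: "'a \<Rightarrow> 'k" and B :: "'a set" and dual :: "'a \<Rightarrow> 'a"
  assumes tr_add: "tr (a + b) = tr a + tr b"
    and tr_scale: "tr (scale c a) = c * tr a"
    and tr_even: "a \<in> gr True \<Longrightarrow> tr a = 0"
    and tr_symm: "a \<in> gr i \<Longrightarrow> b \<in> gr j \<Longrightarrow>
                  tr (a * b) = (if i \<and> j then - tr (b * a) else tr (b * a))"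
    and B_finite: "finite B"
    and B_independent: "independent B"
    and B_span: "span B = UNIV"
    and B_homogeneous: "B \<subseteq> gr False \<union> gr True"
    and dual_basis: "b1 \<in> B \<Longrightarrow> b2 \<in> B \<Longrightarrow> tr (dual b1 * b2) = (if b1 = b2 then 1 else 0)"

text \<open>A k-linear category with objects the natural numbers is encoded by the
  k-module of all morphisms (direct sum of all Hom-spaces), with identities
  idn n, composition cmp (cmp f g = f after g, zero when not composable)
  and tensor product tns.  Object n stands for the n-th tensor power of the
  generating object.\<close>

definition hom :: "('m \<Rightarrow> 'm \<Rightarrow> 'm) \<Rightarrow> (nat \<Rightarrow> 'm) \<Rightarrow> nat \<Rightarrow> nat \<Rightarrow> 'm set" where
  "hom cmp idn m n = {f. cmp (idn n) f = f \<and> cmp f (idn m) = f}"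

locale strict_monoidal_supercat = super_module scale gr
  for scale :: "'k::comm_ring_1 \<Rightarrow> 'm::ab_group_add \<Rightarrow> 'm" and gr +
  fixes idn :: "nat \<Rightarrow> 'm" and cmp :: "'m \<Rightarrow> 'm \<Rightarrow> 'm" and tns :: "'m \<Rightarrow> 'm \<Rightarrow> 'm"
  assumes cmp_add_left: "cmp (f + g) h = cmp f h + cmp g h"
    and cmp_add_right: "cmp f (g + h) = cmp f g + cmp f h"
    and cmp_scale_left: "cmp (scale k f) g = scale k (cmp f g)"
    and cmp_scale_right: "cmp f (scale k g) = scale k (cmp f g)"
    and cmp_assoc: "cmp (cmp f g) h = cmp f (cmp g h)"
    and idn_orth: "cmp (idn m) (idn n) = (if m = n then idn m else 0)"
    and idn_even: "idn n \<in> gr False"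
    and cmp_gr: "f \<in> gr i \<Longrightarrow> g \<in> gr j \<Longrightarrow> cmp f g \<in> gr (i \<noteq> j)"
    and tns_add_left: "tns (f + g) h = tns f h + tns g h"
    and tns_add_right: "tns f (g + h) = tns f g + tns f h"
    and tns_scale_left: "tns (scale k f) g = scale k (tns f g)"
    and tns_scale_right: "tns f (scale k g) = scale k (tns f g)"
    and tns_assoc: "tns (tns f g) h = tns f (tns g h)"
    and tns_idn: "tns (idn m) (idn n) = idn (m + n)"
    and tns_unit_left: "tns (idn 0) f = f"
    and tns_unit_right: "tns f (idn 0) = f"
    and tns_gr: "f \<in> gr i \<Longrightarrow> g \<in> gr j \<Longrightarrow> tns f g \<in> gr (i \<noteq> j)"
    and tns_hom: "f \<in> hom cmp idn o1 o2 \<Longrightarrow> g \<in> hom cmp idn o3 o4 \<Longrightarrow>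
                  tns f g \<in> hom cmp idn (o1 + o3) (o2 + o4)"
    and super_interchange:
      "f \<in> hom cmp idn o1 o2 \<Longrightarrow> f' \<in> hom cmp idn o2 o3 \<Longrightarrow>
       g' \<in> hom cmp idn o4 o5 \<Longrightarrow> g \<in> hom cmp idn o5 o6 \<Longrightarrow>
       f \<in> gr i \<Longrightarrow> g \<in> gr j \<Longrightarrow>
       cmp (tns f' g) (tns f g') =
         (if i \<and> j then - tns (cmp f' f) (cmp g g') else tns (cmp f' f) (cmp g g'))"

text \<open>qaw_rep ... holds iff (S, Sm, tau, x) with inverse xinv of x are morphisms
  in a strict k-linear monoidal supercategory satisfying all defining
  relations of QAW(A;z) (object 1 = the generating object).  Since QAW(A;z) is
  the free such category, an identity holds in QAW(A;z) iff it holds for every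
  such qaw_rep.\<close>

locale qaw_rep =
  A: symmetric_frobenius_superalgebra ascale agr tr B dual +
  C: strict_monoidal_supercat mscale mgr idn cmp tns
  for ascale :: "'k::comm_ring_1 \<Rightarrow> 'a::ring_1 \<Rightarrow> 'a" and agr tr B dual
  and mscale :: "'k \<Rightarrow> 'm::ab_group_add \<Rightarrow> 'm" and mgr idn cmp tns +
  fixes z :: 'k and S Sm x xinv :: 'm and tau :: "'a \<Rightarrow> 'm"
  assumes z_unit: "z dvd 1"
    and S_hom: "S \<in> hom cmp idn 2 2" and S_even: "S \<in> mgr False"
    and Sm_hom: "Sm \<in> hom cmp idn 2 2" and Sm_even: "Sm \<in> mgr False"
    and tau_hom: "tau a \<in> hom cmp idn 1 1"
    and tau_gr: "a \<in> agr i \<Longrightarrow> tau a \<in> mgr i"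
    and tau_add: "tau (a + b) = tau a + tau b"
    and tau_scale: "tau (ascale c a) = mscale c (tau a)"
    and tau_mult: "tau (a * b) = cmp (tau a) (tau b)"
    and tau_one: "tau 1 = idn 1"
    and x_hom: "x \<in> hom cmp idn 1 1" and x_even: "x \<in> mgr False"
    and xinv_hom: "xinv \<in> hom cmp idn 1 1"
    and x_xinv: "cmp x xinv = idn 1" and xinv_x: "cmp xinv x = idn 1"
    and S_Sm: "cmp S Sm = idn 2" and Sm_S: "cmp Sm S = idn 2"
    and braid: "cmp (tns S (idn 1)) (cmp (tns (idn 1) S) (tns S (idn 1))) =
                cmp (tns (idn 1) S) (cmp (tns S (idn 1)) (tns (idn 1) S))"
    and S_tau: "cmp S (tns (tau a) (idn 1)) = cmp (tns (idn 1) (tau a)) S"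
    and Sm_tau: "cmp Sm (tns (tau a) (idn 1)) = cmp (tns (idn 1) (tau a)) Sm"
    and skein: "S - Sm = mscale z (\<Sum>b\<in>B. tns (tau b) (tau (dual b)))"
    and x_tau: "cmp x (tau a) = cmp (tau a) x"
    and S_x: "cmp S (tns (idn 1) x) = cmp (tns x (idn 1)) Sm"
    and Sm_x: "cmp Sm (tns x (idn 1)) = cmp (tns (idn 1) x) S"

definition mpow :: "('m \<Rightarrow> 'm \<Rightarrow> 'm) \<Rightarrow> 'm \<Rightarrow> 'm \<Rightarrow> 'm \<Rightarrow> int \<Rightarrow> 'm" where
  "mpow cmp one x xinv n =
     (if 0 \<le> n then ((cmp x) ^^ nat n) one else ((cmp xinv) ^^ nat (- n)) one)"

end

theory Submission
  imports Defs
begin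

(* Write dots r s for x^r (x) x^s and T for the skein term, so that S - S^- = T and T commutes
   with every dots r s. By the dot-crossing relation, D n = S o dots 0 n - dots n 0 o S^-
   satisfies the first-order recurrence D (n + 1) = D n o dots 0 1 - dots n 1 o T with D 0 = T.
   Composition with the invertible dots 0 1 is injective on End(2), so this recurrence has at
   most one solution over all of Z, and the oriented sum of dots r (n - r) o T over r from n to 1
   is one; it packages the case distinction n > 0 / n <= 0 of (i) into a single formula. The same
   argument with the dot on the other strand gives (ii), and substituting S^- = S - T turns (i)
   and (ii) into (iv) and (iii). *)

definition oriented_sum :: "(int \<Rightarrow> 'a::ab_group_add) \<Rightarrow> int \<Rightarrow> int \<Rightarrow> 'a" where
  "oriented_sum f a b = (if a \<le> b then (\<Sum>r\<in>{a..<b}. f r) else - (\<Sum>r\<in>{b..<a}. f r))"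

lemma oriented_sum_same [simp]: "oriented_sum f a a = 0"
  by (simp add: oriented_sum_def)

lemma oriented_sum_extend: "oriented_sum f a (b + 1) = oriented_sum f a b + f b"
proof (cases "a \<le> b")
  case True
  then have "{a..<b + 1} = insert b {a..<b}" by auto
  with True show ?thesis by (simp add: oriented_sum_def)
next
  case False
  then have "{b..<a} = insert b {b + 1..<a}" by auto
  with False show ?thesis by (simp add: oriented_sum_def)
qed

lemma oriented_sum_concat: "oriented_sum f a b + oriented_sum f b c = oriented_sum f a c"
proof (induction c rule: int_induct[where k = b])
  case base
  show ?case by simp
next
  case (step1 i)
  then show ?case by (simp add: oriented_sum_extend add.assoc[symmetric])
next
  case (step2 i)
  then show ?case using oriented_sum_extend[of f _ "i - 1"] by (simp add: algebra_simps)
qed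

lemma oriented_sum_swap: "oriented_sum f b a = - oriented_sum f a b"
  using oriented_sum_concat[of f a b a] by (simp add: eq_neg_iff_add_eq_0 add.commute)

lemma oriented_sum_singleton [simp]: "oriented_sum f a (a + 1) = f a"
  by (simp add: oriented_sum_extend)

lemma oriented_sum_shift: "oriented_sum (\<lambda>r. f (r + k)) a b = oriented_sum f (a + k) (b + k)"
proof -
  have "(\<Sum>r\<in>{l..<m}. f (r + k)) = (\<Sum>r\<in>{l + k..<m + k}. f r)" for l m
    by (rule sum.reindex_bij_witness[where i = "\<lambda>r. r - k" and j = "\<lambda>r. r + k"]) auto
  then show ?thesis by (simp add: oriented_sum_def)
qed

lemma (in additive) oriented_sum: "f (oriented_sum g a b) = oriented_sum (\<lambda>r. f (g r)) a b"
  by (simp add: oriented_sum_def sum minus)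

lemma oriented_sum_ends:
  "oriented_sum f a (b + 1) = f a + f b - oriented_sum f b (a + 1)"
proof -
  have "oriented_sum f a (b + 1) = f a + oriented_sum f (a + 1) (b + 1)"
    using oriented_sum_concat[of f a "a + 1" "b + 1"] by simp
  moreover have "oriented_sum f b (a + 1) = f b - oriented_sum f (a + 1) (b + 1)"
    using oriented_sum_concat[of f b "b + 1" "a + 1"] oriented_sum_swap[of f "a + 1" "b + 1"]
    by simp
  ultimately show ?thesis by simp
qed

lemma sum_antidiagonal:
  "(\<Sum>(r, s)\<in>{(r, s). r + s = n \<and> Q r s}. G r s) = (\<Sum>r\<in>{r. Q r (n - r)}. G r (n - r))"
  for n :: int
  by (rule sum.reindex_cong[where l = "\<lambda>r. (r, n - r)"]) (auto simp: inj_on_def)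

lemma oriented_sum_from_zero_antidiagonal:
  fixes G :: "int \<Rightarrow> int \<Rightarrow> 'a::ab_group_add"
  shows "oriented_sum (\<lambda>r. G r (n - r)) 0 (n + 1) =
    (if 0 \<le> n then (\<Sum>(r, s)\<in>{(r, s). r + s = n \<and> 0 \<le> r \<and> 0 \<le> s}. G r s)
     else - (\<Sum>(r, s)\<in>{(r, s). r + s = n \<and> r < 0 \<and> s < 0}. G r s))"
proof -
  have "{r. 0 \<le> r \<and> 0 \<le> n - r} = {0..<n + 1}" "{r. r < 0 \<and> n - r < 0} = {n + 1..<0}"
    by auto
  then show ?thesis
    using oriented_sum_swap[of "\<lambda>r. G r (n - r)" "n + 1" 0]
    by (simp add: oriented_sum_def sum_antidiagonal)
qed

lemma oriented_sum_to_one_antidiagonal: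
  fixes G :: "int \<Rightarrow> int \<Rightarrow> 'a::ab_group_add"
  shows "oriented_sum (\<lambda>r. G r (n - r)) n 1 =
    (if 0 < n then - (\<Sum>(r, s)\<in>{(r, s). r + s = n \<and> 0 < r \<and> 0 < s}. G r s)
     else (\<Sum>(r, s)\<in>{(r, s). r + s = n \<and> r \<le> 0 \<and> s \<le> 0}. G r s))"
proof -
  have "{r. 0 < r \<and> 0 < n - r} = {1..<n}" "{r. r \<le> 0 \<and> n - r \<le> 0} = {n..<1}"
    by auto
  then show ?thesis
    using oriented_sum_swap[of "\<lambda>r. G r (n - r)" n 1]
    by (simp add: oriented_sum_def sum_antidiagonal)
qed

lemma int_recurrence_unique:
  fixes D D' :: "int \<Rightarrow> 'a"
  assumes "\<And>n. D (n + 1) = F n (D n)" and "\<And>n. D' (n + 1) = F n (D' n)"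
    and "\<And>n. inj_on (F n) A" and "\<And>n. D n \<in> A" and "\<And>n. D' n \<in> A"
    and "D 0 = D' 0"
  shows "D n = D' n"
proof (induction n rule: int_induct[where k = 0])
  case base
  show ?case by (fact assms(6))
next
  case (step1 i)
  then show ?case by (simp add: assms(1,2))
next
  case (step2 i)
  then have "F (i - 1) (D (i - 1)) = F (i - 1) (D' (i - 1))"
    using assms(1,2)[of "i - 1"] by simp
  then show ?case using assms(3-5) by (meson inj_onD)
qed

context strict_monoidal_supercat
begin

lemma additive_cmp_left: "additive (\<lambda>f. cmp f h)"
  by unfold_locales (rule cmp_add_left)

lemma additive_cmp_right: "additive (\<lambda>f. cmp h f)"
  by unfold_locales (rule cmp_add_right)

lemmas cmp_diff_left = additive.diff[OF additive_cmp_left]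
lemmas cmp_diff_right = additive.diff[OF additive_cmp_right]
lemmas cmp_sum_left = additive.sum[OF additive_cmp_left]
lemmas cmp_sum_right = additive.sum[OF additive_cmp_right]
lemmas cmp_oriented_sum_left = additive.oriented_sum[OF additive_cmp_left]
lemmas cmp_oriented_sum_right = additive.oriented_sum[OF additive_cmp_right]

lemma idn_hom: "idn n \<in> hom cmp idn n n"
  by (simp add: hom_def idn_orth)

lemma hom_cmp: "f \<in> hom cmp idn m n \<Longrightarrow> g \<in> hom cmp idn n p \<Longrightarrow> cmp g f \<in> hom cmp idn m p"
  unfolding hom_def by (simp add: cmp_assoc[symmetric]) (simp add: cmp_assoc)

lemma hom_diff: "f \<in> hom cmp idn m n \<Longrightarrow> g \<in> hom cmp idn m n \<Longrightarrow> f - g \<in> hom cmp idn m n"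
  by (simp add: hom_def cmp_diff_left cmp_diff_right)

lemma hom_oriented_sum:
  "(\<And>r. f r \<in> hom cmp idn m n) \<Longrightarrow> oriented_sum f a b \<in> hom cmp idn m n"
  by (simp add: hom_def cmp_oriented_sum_left cmp_oriented_sum_right)

lemma hom_homogeneous_decomp:
  assumes "f \<in> hom cmp idn m n"
  obtains f0 f1 where "f = f0 + f1" "f0 \<in> hom cmp idn m n" "f1 \<in> hom cmp idn m n"
    "f0 \<in> gr False" "f1 \<in> gr True"
proof -
  obtain v0 v1 where v: "v0 \<in> gr False" "v1 \<in> gr True" "f = v0 + v1"
    using gr_sum by blast
  let ?restrict = "\<lambda>v. cmp (idn n) (cmp v (idn m))"
  have "f = cmp (idn n) (cmp f (idn m))"
    using assms by (simp add: hom_def)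
  also have "\<dots> = ?restrict v0 + ?restrict v1"
    by (simp add: v(3) cmp_add_left cmp_add_right)
  finally have "f = ?restrict v0 + ?restrict v1" .
  moreover have "?restrict v \<in> hom cmp idn m n" for v
    unfolding hom_def by (simp add: cmp_assoc[symmetric]) (simp add: cmp_assoc idn_orth)
  moreover have "?restrict v0 \<in> gr False" "?restrict v1 \<in> gr True"
    using cmp_gr[OF idn_even cmp_gr[OF v(1) idn_even]] cmp_gr[OF idn_even cmp_gr[OF v(2) idn_even]]
    by simp_all
  ultimately show ?thesis using that by blast
qed

lemma interchange_even_left:
  assumes "f \<in> hom cmp idn o1 o2" "f' \<in> hom cmp idn o2 o3" "g' \<in> hom cmp idn o4 o5"
    "g \<in> hom cmp idn o5 o6" "f \<in> gr False"
  shows "cmp (tns f' g) (tns f g') = tns (cmp f' f) (cmp g g')"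
proof -
  obtain g0 g1 where g: "g = g0 + g1" "g0 \<in> hom cmp idn o5 o6" "g1 \<in> hom cmp idn o5 o6"
    "g0 \<in> gr False" "g1 \<in> gr True"
    using hom_homogeneous_decomp[OF assms(4)] .
  show ?thesis
    using super_interchange[OF assms(1-3) g(2) assms(5) g(4)]
      super_interchange[OF assms(1-3) g(3) assms(5) g(5)]
    by (simp add: g(1) tns_add_right tns_add_left cmp_add_left)
qed

lemma interchange_even_right:
  assumes "f \<in> hom cmp idn o1 o2" "f' \<in> hom cmp idn o2 o3" "g' \<in> hom cmp idn o4 o5"
    "g \<in> hom cmp idn o5 o6" "g \<in> gr False"
  shows "cmp (tns f' g) (tns f g') = tns (cmp f' f) (cmp g g')"
proof -
  obtain f0 f1 where f: "f = f0 + f1" "f0 \<in> hom cmp idn o1 o2" "f1 \<in> hom cmp idn o1 o2"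
    "f0 \<in> gr False" "f1 \<in> gr True"
    using hom_homogeneous_decomp[OF assms(1)] .
  show ?thesis
    using super_interchange[OF f(2) assms(2,3,4) f(4) assms(5)]
      super_interchange[OF f(3) assms(2,3,4) f(5) assms(5)]
    by (simp add: f(1) tns_add_right tns_add_left cmp_add_right)
qed

lemma inverse_even:
  assumes "u \<in> gr False" "v \<in> hom cmp idn m m" "cmp u v = idn m" "cmp v u = idn m"
  shows "v \<in> gr False"
proof -
  obtain v0 v1 where v: "v0 \<in> gr False" "v1 \<in> gr True" "v = v0 + v1"
    using gr_sum by blast
  have odd_part: "cmp u v1 = idn m - cmp u v0"
    using assms(3) v(3) by (simp add: cmp_add_right algebra_simps)
  have "cmp u v0 \<in> gr False"
    using cmp_gr[OF assms(1) v(1)] by simp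
  then have "cmp u v1 \<in> gr False"
    unfolding odd_part by (rule subspace_diff[OF gr_subspace idn_even])
  moreover have "cmp u v1 \<in> gr True"
    using cmp_gr[OF assms(1) v(2)] by simp
  ultimately have "cmp u v1 = 0"
    using gr_direct by blast
  then have "cmp u v0 = idn m"
    using odd_part by simp
  then have "v = cmp (cmp v u) v0"
    using assms(2) by (simp add: hom_def cmp_assoc)
  then show ?thesis
    using cmp_gr[OF idn_even v(1)] assms(4) by simp
qed

lemma funpow_cmp_hom: "w \<in> hom cmp idn m m \<Longrightarrow> (cmp w ^^ k) (idn m) \<in> hom cmp idn m m"
  by (induction k) (simp_all add: idn_hom hom_cmp)

lemma funpow_cmp_even: "w \<in> gr False \<Longrightarrow> (cmp w ^^ k) (idn m) \<in> gr False"
  by (induction k) (auto simp: idn_even dest: cmp_gr)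

context
  fixes m :: nat and u v :: 'm
  assumes u_hom: "u \<in> hom cmp idn m m" and v_hom: "v \<in> hom cmp idn m m"
    and u_v: "cmp u v = idn m" and v_u: "cmp v u = idn m"
begin

abbreviation upow :: "int \<Rightarrow> 'm" where
  "upow \<equiv> mpow cmp (idn m) u v"

lemma mpow_hom: "upow n \<in> hom cmp idn m m"
  unfolding mpow_def using funpow_cmp_hom[OF u_hom] funpow_cmp_hom[OF v_hom] by simp

lemma mpow_zero [simp]: "upow 0 = idn m"
  by (simp add: mpow_def)

lemma mpow_nonpos: "n \<le> 0 \<Longrightarrow> upow n = (cmp v ^^ nat (- n)) (idn m)"
  by (cases "n = 0") (simp_all add: mpow_def)

lemma mpow_succ: "upow (n + 1) = cmp u (upow n)"
proof (cases "0 \<le> n")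
  case True
  then have "nat (n + 1) = Suc (nat n)" by simp
  with True show ?thesis by (simp add: mpow_def)
next
  case False
  then have "nat (- n) = Suc (nat (- (n + 1)))" by simp
  then have "upow n = cmp v (upow (n + 1))"
    using False mpow_nonpos[of n] mpow_nonpos[of "n + 1"] by simp
  then show ?thesis
    using mpow_hom[of "n + 1"] u_v by (simp add: cmp_assoc[symmetric] hom_def)
qed

lemma mpow_pred: "upow (n - 1) = cmp v (upow n)"
  using mpow_succ[of "n - 1"] mpow_hom[of "n - 1"] v_u by (simp add: cmp_assoc[symmetric] hom_def)

lemma mpow_one: "upow 1 = u"
  using mpow_succ[of 0] u_hom by (simp add: hom_def)

lemma mpow_add: "cmp (upow a) (upow b) = upow (a + b)"
proof (induction a rule: int_induct[where k = 0])
  case base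
  show ?case using mpow_hom[of b] by (simp add: hom_def)
next
  case (step1 i)
  have "cmp (upow (i + 1)) (upow b) = cmp u (upow (i + b))"
    by (simp add: mpow_succ cmp_assoc step1)
  also have "\<dots> = upow (i + 1 + b)"
    using mpow_succ[of "i + b"] by (simp add: ac_simps)
  finally show ?case .
next
  case (step2 i)
  have "cmp (upow (i - 1)) (upow b) = cmp v (upow (i + b))"
    by (simp add: mpow_pred cmp_assoc step2)
  also have "\<dots> = upow (i - 1 + b)"
    using mpow_pred[of "i + b"] by (simp add: algebra_simps)
  finally show ?case .
qed

lemma mpow_even: "u \<in> gr False \<Longrightarrow> upow n \<in> gr False"
  unfolding mpow_def using funpow_cmp_even inverse_even[OF _ v_hom u_v v_u] by simp

lemma mpow_commute:
  assumes a_hom: "a \<in> hom cmp idn m m" and u_a: "cmp u a = cmp a u"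
  shows "cmp (upow n) a = cmp a (upow n)"
proof -
  have v_a: "cmp v a = cmp a v"
  proof -
    have "cmp v a = cmp v (cmp a (cmp u v))"
      using a_hom u_v by (simp add: hom_def)
    also have "\<dots> = cmp v (cmp (cmp u a) v)"
      by (simp add: cmp_assoc u_a)
    also have "\<dots> = cmp (cmp v u) (cmp a v)"
      by (simp add: cmp_assoc)
    finally show ?thesis
      using a_hom v_u by (simp add: hom_def cmp_assoc[symmetric])
  qed
  show ?thesis
  proof (induction n rule: int_induct[where k = 0])
    case base
    show ?case using a_hom by (simp add: hom_def)
  next
    case (step1 i)
    then show ?case by (simp add: mpow_succ cmp_assoc) (simp add: cmp_assoc[symmetric] u_a)
  next
    case (step2 i)
    then show ?case by (simp add: mpow_pred cmp_assoc) (simp add: cmp_assoc[symmetric] v_a)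
  qed
qed

end

end

declare One_nat_def [simp del]

context qaw_rep
begin

abbreviation X :: "int \<Rightarrow> 'm" where
  "X \<equiv> mpow cmp (idn 1) x xinv"

abbreviation T :: 'm where
  "T \<equiv> mscale z (\<Sum>b\<in>B. tns (tau b) (tau (dual b)))"

abbreviation dots :: "int \<Rightarrow> int \<Rightarrow> 'm" where
  "dots r s \<equiv> tns (X r) (X s)"

abbreviation dotsT :: "int \<Rightarrow> int \<Rightarrow> 'm" where
  "dotsT r s \<equiv> cmp (dots r s) T"

lemmas X_hom = C.mpow_hom[OF x_hom xinv_hom x_xinv xinv_x]
lemmas X_zero = C.mpow_zero[OF x_hom xinv_hom x_xinv xinv_x]
lemmas X_one = C.mpow_one[OF x_hom xinv_hom x_xinv xinv_x]
lemmas X_add = C.mpow_add[OF x_hom xinv_hom x_xinv xinv_x]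
lemmas X_even = C.mpow_even[OF x_hom xinv_hom x_xinv xinv_x x_even]
lemmas X_tau = C.mpow_commute[OF x_hom xinv_hom x_xinv xinv_x tau_hom x_tau]

lemma dots_hom: "dots r s \<in> hom cmp idn 2 2"
  using C.tns_hom[OF X_hom X_hom] by simp

lemma dots_mult: "cmp (dots a b) (dots c d) = dots (a + c) (b + d)"
  using C.interchange_even_left[OF X_hom[of c] X_hom[of a] X_hom[of d] X_hom[of b] X_even[of c]]
  by (simp add: X_add)

lemma dots_zero: "dots 0 0 = idn 2"
  using C.tns_idn[of 1 1] by (simp add: X_zero)

lemma tns_commute_T:
  assumes "p \<in> hom cmp idn 1 1" "q \<in> hom cmp idn 1 1" "p \<in> mgr False" "q \<in> mgr False"
    and "\<And>a. cmp p (tau a) = cmp (tau a) p" "\<And>a. cmp q (tau a) = cmp (tau a) q"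
  shows "cmp (tns p q) T = cmp T (tns p q)"
proof -
  have "cmp (tns p q) (tns (tau a) (tau b)) = cmp (tns (tau a) (tau b)) (tns p q)" for a b
  proof -
    have "cmp (tns p q) (tns (tau a) (tau b)) = tns (cmp p (tau a)) (cmp q (tau b))"
      by (rule C.interchange_even_right[OF tau_hom assms(1) tau_hom assms(2) assms(4)])
    also have "\<dots> = tns (cmp (tau a) p) (cmp (tau b) q)"
      using assms(5,6) by simp
    also have "\<dots> = cmp (tns (tau a) (tau b)) (tns p q)"
      by (rule C.interchange_even_left[OF assms(1) tau_hom assms(2) tau_hom assms(3), symmetric])
    finally show ?thesis .
  qed
  then show ?thesis
    by (simp add: C.cmp_scale_left C.cmp_scale_right C.cmp_sum_left C.cmp_sum_right)
qed

lemma dots_commute_T: "cmp (dots r s) T = cmp T (dots r s)"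
  by (rule tns_commute_T[OF X_hom X_hom X_even X_even X_tau X_tau])

lemma Sm_eq: "Sm = S - T"
  using skein by (simp add: algebra_simps)

lemma T_hom: "T \<in> hom cmp idn 2 2"
  using C.hom_diff[OF S_hom Sm_hom] by (simp add: Sm_eq)

lemma dotsT_hom: "dotsT r s \<in> hom cmp idn 2 2"
  by (rule C.hom_cmp[OF T_hom dots_hom])

lemma dotsT_zero: "dotsT 0 0 = T"
  using T_hom by (simp add: dots_zero hom_def)

lemma dots_dotsT: "cmp (dots a b) (dotsT r s) = dotsT (a + r) (b + s)"
  by (simp add: C.cmp_assoc[symmetric] dots_mult)

lemma dotsT_dots: "cmp (dotsT r s) (dots a b) = dotsT (r + a) (s + b)"
  by (simp add: C.cmp_assoc dots_commute_T[of a b, symmetric])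
    (simp add: C.cmp_assoc[symmetric] dots_mult)

lemma inj_on_cmp_dots: "inj_on (\<lambda>y. cmp y (dots a b)) (hom cmp idn 2 2)"
proof (rule inj_onI)
  fix y y'
  assume "y \<in> hom cmp idn 2 2" "y' \<in> hom cmp idn 2 2" "cmp y (dots a b) = cmp y' (dots a b)"
  then have "cmp y (cmp (dots a b) (dots (- a) (- b)))
      = cmp y' (cmp (dots a b) (dots (- a) (- b)))"
    by (simp add: C.cmp_assoc[symmetric])
  with \<open>y \<in> _\<close> \<open>y' \<in> _\<close> show "y = y'"
    by (simp add: dots_mult dots_zero hom_def)
qed

lemma S_dots_0_1: "cmp S (dots 0 1) = cmp (dots 1 0) Sm"
  using S_x by (simp add: X_zero X_one)

lemma Sm_dots_1_0: "cmp Sm (dots 1 0) = cmp (dots 0 1) S"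
  using Sm_x by (simp add: X_zero X_one)

lemma S_dot_right_succ:
  "cmp S (dots 0 (n + 1)) - cmp (dots (n + 1) 0) Sm
    = cmp (cmp S (dots 0 n) - cmp (dots n 0) Sm) (dots 0 1) - dotsT n 1"
proof -
  have "cmp (dots (n + 1) 0) Sm = cmp (dots n 0) (cmp S (dots 0 1))"
    using dots_mult[of n 0 1 0] by (simp add: C.cmp_assoc[symmetric] S_dots_0_1)
  also have "\<dots> = cmp (cmp (dots n 0) Sm) (dots 0 1) + dotsT n 1"
    using dots_dotsT[of n 0 0 1]
    by (simp add: Sm_eq C.cmp_diff_left C.cmp_diff_right C.cmp_assoc dots_commute_T[symmetric])
  finally show ?thesis
    using dots_mult[of 0 n 0 1] by (simp add: C.cmp_assoc C.cmp_diff_left)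
qed

lemma S_dot_left_succ:
  "cmp S (dots (n + 1) 0) - cmp (dots 0 (n + 1)) Sm
    = cmp (cmp S (dots n 0) - cmp (dots 0 n) Sm) (dots 1 0) + dotsT 0 (n + 1)"
proof -
  have "cmp (dots 0 1) Sm = cmp (dots 0 1) S - dotsT 0 1"
    by (simp add: Sm_eq C.cmp_diff_right)
  also have "\<dots> = cmp Sm (dots 1 0) - dotsT 0 1"
    by (simp add: Sm_dots_1_0)
  finally have dots_0_1_Sm: "cmp (dots 0 1) Sm = cmp Sm (dots 1 0) - dotsT 0 1" .
  have "cmp (dots 0 (n + 1)) Sm = cmp (dots 0 n) (cmp (dots 0 1) Sm)"
    using dots_mult[of 0 n 0 1] by (simp add: C.cmp_assoc[symmetric])
  also have "\<dots> = cmp (cmp (dots 0 n) Sm) (dots 1 0) - dotsT 0 (n + 1)"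
    using dots_dotsT[of 0 n 0 1] by (simp add: dots_0_1_Sm C.cmp_diff_right C.cmp_assoc)
  finally show ?thesis
    using dots_mult[of n 0 1 0] by (simp add: C.cmp_assoc C.cmp_diff_left)
qed

lemma S_dot_right:
  "cmp S (dots 0 n) = cmp (dots n 0) Sm + oriented_sum (\<lambda>r. dotsT r (n - r)) n 1"
proof -
  let ?D = "\<lambda>n. cmp S (dots 0 n) - cmp (dots n 0) Sm"
  let ?R = "\<lambda>n. oriented_sum (\<lambda>r. dotsT r (n - r)) n 1"
  have "?D n = ?R n"
  proof (rule int_recurrence_unique[where D = ?D and D' = ?R and A = "hom cmp idn 2 2"
        and F = "\<lambda>n y. cmp y (dots 0 1) - dotsT n 1"])
    show "?D (n + 1) = cmp (?D n) (dots 0 1) - dotsT n 1" for n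
      by (rule S_dot_right_succ)
    show "?R (n + 1) = cmp (?R n) (dots 0 1) - dotsT n 1" for n
    proof -
      let ?f = "\<lambda>r. dotsT r (n + 1 - r)"
      have "cmp (?R n) (dots 0 1) = oriented_sum ?f n 1"
        by (simp add: C.cmp_oriented_sum_left dotsT_dots algebra_simps)
      also have "\<dots> = dotsT n 1 + ?R (n + 1)"
        using oriented_sum_concat[of ?f n "n + 1" 1] by simp
      finally show ?thesis by simp
    qed
    show "inj_on (\<lambda>y. cmp y (dots 0 1) - dotsT n 1) (hom cmp idn 2 2)" for n
      using inj_on_cmp_dots[of 0 1] by (simp add: inj_on_def)
    show "?D n \<in> hom cmp idn 2 2" for n
      by (rule C.hom_diff[OF C.hom_cmp[OF dots_hom S_hom] C.hom_cmp[OF Sm_hom dots_hom]])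
    show "?R n \<in> hom cmp idn 2 2" for n
      by (intro C.hom_oriented_sum dotsT_hom)
    show "?D 0 = ?R 0"
      using S_hom Sm_hom T_hom oriented_sum_singleton[of "\<lambda>r. dotsT r (- r)" 0]
      by (simp add: dots_zero dotsT_zero Sm_eq hom_def)
  qed
  then show ?thesis by (simp add: algebra_simps)
qed

lemma S_dot_left:
  "cmp S (dots n 0) = cmp (dots 0 n) Sm + oriented_sum (\<lambda>r. dotsT r (n - r)) 0 (n + 1)"
proof -
  let ?D = "\<lambda>n. cmp S (dots n 0) - cmp (dots 0 n) Sm"
  let ?R = "\<lambda>n. oriented_sum (\<lambda>r. dotsT r (n - r)) 0 (n + 1)"
  have "?D n = ?R n"
  proof (rule int_recurrence_unique[where D = ?D and D' = ?R and A = "hom cmp idn 2 2"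
        and F = "\<lambda>n y. cmp y (dots 1 0) + dotsT 0 (n + 1)"])
    show "?D (n + 1) = cmp (?D n) (dots 1 0) + dotsT 0 (n + 1)" for n
      by (rule S_dot_left_succ)
    show "?R (n + 1) = cmp (?R n) (dots 1 0) + dotsT 0 (n + 1)" for n
    proof -
      let ?f = "\<lambda>r. dotsT r (n + 1 - r)"
      have "cmp (?R n) (dots 1 0) = oriented_sum (\<lambda>r. ?f (r + 1)) 0 (n + 1)"
        by (simp add: C.cmp_oriented_sum_left dotsT_dots algebra_simps)
      also have "\<dots> = oriented_sum ?f 1 (n + 2)"
        using oriented_sum_shift[of ?f 1 0 "n + 1"] by (simp add: add.commute)
      finally show ?thesis
        using oriented_sum_concat[of ?f 0 1 "n + 2"] oriented_sum_singleton[of ?f 0]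
        by (simp add: algebra_simps)
    qed
    show "inj_on (\<lambda>y. cmp y (dots 1 0) + dotsT 0 (n + 1)) (hom cmp idn 2 2)" for n
      using inj_on_cmp_dots[of 1 0] by (simp add: inj_on_def)
    show "?D n \<in> hom cmp idn 2 2" for n
      by (rule C.hom_diff[OF C.hom_cmp[OF dots_hom S_hom] C.hom_cmp[OF Sm_hom dots_hom]])
    show "?R n \<in> hom cmp idn 2 2" for n
      by (intro C.hom_oriented_sum dotsT_hom)
    show "?D 0 = ?R 0"
      using S_hom Sm_hom T_hom oriented_sum_singleton[of "\<lambda>r. dotsT r (- r)" 0]
      by (simp add: dots_zero dotsT_zero Sm_eq hom_def)
  qed
  then show ?thesis by (simp add: algebra_simps)
qed

lemma Sm_dot_from_S_dot:
  assumes "cmp S (dots a b) = cmp (dots b a) Sm + Y"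
  shows "cmp Sm (dots a b) = cmp (dots b a) S + Y - dotsT a b - dotsT b a"
  using assms by (simp add: Sm_eq C.cmp_diff_left C.cmp_diff_right dots_commute_T)

lemma Sm_dot_left:
  "cmp Sm (dots n 0) = cmp (dots 0 n) S - oriented_sum (\<lambda>r. dotsT r (n - r)) n 1"
proof -
  have ends: "oriented_sum (\<lambda>r. dotsT r (n - r)) 0 (n + 1)
      = dotsT 0 n + dotsT n 0 - oriented_sum (\<lambda>r. dotsT r (n - r)) n 1"
    using oriented_sum_ends[of "\<lambda>r. dotsT r (n - r)" 0 n] by simp
  show ?thesis
    using Sm_dot_from_S_dot[OF S_dot_left[of n], unfolded ends] by (simp add: algebra_simps)
qed

lemma Sm_dot_right:
  "cmp Sm (dots 0 n) = cmp (dots n 0) S - oriented_sum (\<lambda>r. dotsT r (n - r)) 0 (n + 1)"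
proof -
  have ends: "oriented_sum (\<lambda>r. dotsT r (n - r)) n 1
      = dotsT n 0 + dotsT 0 n - oriented_sum (\<lambda>r. dotsT r (n - r)) 0 (n + 1)"
    using oriented_sum_ends[of "\<lambda>r. dotsT r (n - r)" n 0] by simp
  show ?thesis
    using Sm_dot_from_S_dot[OF S_dot_right[of n], unfolded ends] by (simp add: algebra_simps)
qed

end

theorem lemma3p1:
  fixes ascale :: "'k::comm_ring_1 \<Rightarrow> 'a::ring_1 \<Rightarrow> 'a"
    and mscale :: "'k \<Rightarrow> 'm::ab_group_add \<Rightarrow> 'm"
    and n :: int
  assumes "qaw_rep ascale agr tr B dual mscale mgr idn cmp tns z S Sm x xinv tau"
  defines "T \<equiv> mscale z (\<Sum>b\<in>B. tns (tau b) (tau (dual b)))"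
    and "X \<equiv> mpow cmp (idn 1) x xinv"
  shows
   "(0 < n \<longrightarrow> cmp S (tns (idn 1) (X n)) = cmp (tns (X n) (idn 1)) Sm
       - (\<Sum>(r, s)\<in>{(r, s). r + s = n \<and> 0 < r \<and> 0 < s}. cmp (tns (X r) (X s)) T)) \<and>
    (n \<le> 0 \<longrightarrow> cmp S (tns (idn 1) (X n)) = cmp (tns (X n) (idn 1)) Sm
       + (\<Sum>(r, s)\<in>{(r, s). r + s = n \<and> r \<le> 0 \<and> s \<le> 0}. cmp (tns (X r) (X s)) T)) \<and>
    (0 \<le> n \<longrightarrow> cmp S (tns (X n) (idn 1)) = cmp (tns (idn 1) (X n)) Sm
       + (\<Sum>(r, s)\<in>{(r, s). r + s = n \<and> 0 \<le> r \<and> 0 \<le> s}. cmp (tns (X r) (X s)) T)) \<and>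
    (n < 0 \<longrightarrow> cmp S (tns (X n) (idn 1)) = cmp (tns (idn 1) (X n)) Sm
       - (\<Sum>(r, s)\<in>{(r, s). r + s = n \<and> r < 0 \<and> s < 0}. cmp (tns (X r) (X s)) T)) \<and>
    (0 < n \<longrightarrow> cmp Sm (tns (X n) (idn 1)) = cmp (tns (idn 1) (X n)) S
       + (\<Sum>(r, s)\<in>{(r, s). r + s = n \<and> 0 < r \<and> 0 < s}. cmp (tns (X r) (X s)) T)) \<and>
    (n \<le> 0 \<longrightarrow> cmp Sm (tns (X n) (idn 1)) = cmp (tns (idn 1) (X n)) S
       - (\<Sum>(r, s)\<in>{(r, s). r + s = n \<and> r \<le> 0 \<and> s \<le> 0}. cmp (tns (X r) (X s)) T)) \<and>
    (0 \<le> n \<longrightarrow> cmp Sm (tns (idn 1) (X n)) = cmp (tns (X n) (idn 1)) S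
       - (\<Sum>(r, s)\<in>{(r, s). r + s = n \<and> 0 \<le> r \<and> 0 \<le> s}. cmp (tns (X r) (X s)) T)) \<and>
    (n < 0 \<longrightarrow> cmp Sm (tns (idn 1) (X n)) = cmp (tns (X n) (idn 1)) S
       + (\<Sum>(r, s)\<in>{(r, s). r + s = n \<and> r < 0 \<and> s < 0}. cmp (tns (X r) (X s)) T))"
proof -
  interpret qaw_rep ascale agr tr B dual mscale mgr idn cmp tns z S Sm x xinv tau
    by (fact assms(1))
  have X0: "X 0 = idn 1"
    unfolding X_def by (rule X_zero)
  show ?thesis
    using S_dot_right[of n] S_dot_left[of n] Sm_dot_left[of n] Sm_dot_right[of n]
      oriented_sum_from_zero_antidiagonal[of "\<lambda>r s. cmp (tns (X r) (X s)) T" n]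
      oriented_sum_to_one_antidiagonal[of "\<lambda>r s. cmp (tns (X r) (X s)) T" n]
    unfolding T_def X_def[symmetric] X0 by simp
qed

end
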